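(* Let $\psi_A\in(0,2\pi)\setminus\{\pi\}$, $\eta\neq0$, $\phi\in(0,\pi)$, and put $A=\tan\frac{\psi_A}{2}$, $h=\frac{\sinh\eta}{\sin\phi}$, $z=\eta+i\phi$. Let $$Q_{A_1}=\begin{pmatrix}\cos\frac{\psi_A}{2}-i\cosh z\,\sin\frac{\psi_A}{2}&i\sinh z\,\sin\frac{\psi_A}{2}\\-i\sinh z\,\sin\frac{\psi_A}{2}&\cos\frac{\psi_A}{2}+i\cosh z\,\sin\frac{\psi_A}{2}\end{pmatrix}.$$ Let $a,b,c,\mu,\chi\in\mathbb{R}$ with $c\neq0$, set $$M=\begin{pmatrix}a+ib&e^{-\mu}c\,e^{i\chi}\\-e^{\mu}c\,e^{-i\chi}&a-ib\end{pmatrix},\qquad P=Q_{A_1}^{-1}M,$$ and suppose $\overline{P_{11}}=P_{22}$. Then, with $m=\tanh\mu$ and provided $\overline{P_{21}}\neq0$ and $(A-h)m-h(hA+1)\neq0$, $$-\frac{P_{12}}{\overline{P_{21}}}=\frac{(A+h)m+h(hA-1)}{(A-h)m-h(hA+1)},$$ which in particular is independent of $a,b,c,\chi$. Equivalently, if this ratio equals $e^{2\mu'}$ with $\mu'\in\mathbb{R}$ and $m'=\tanh\mu'$, then $$mm'-\frac{h}{A}(m+m')-h^2=0.$$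
   Context: Matrices are $\mathrm{SL}(2,\mathbb{C})$ (or $\mathrm{GL}(2,\mathbb{C})$) representatives of Lorentz transformations; $P_{ij}$ denotes the $(i,j)$ entry and the bar denotes complex conjugation. Interpretation: $Q_{A_1}$ is the holonomy of an external semi-infinite defect (deficit angle $\psi_A$, at angle $\phi$ and relative rapidity $\eta$ to a stationary defect $B$ along the $z$-axis); $M$ is the holonomy of an intermediate defect ending on a junction moving with rapidity $\mu$ along the stationary defect $B_1$; the condition $\overline{P_{11}}=P_{22}$ expresses that the next intermediate defect ends on a subluminal junction on $B_2$, whose rapidity $\mu'$ is defined by $e^{2\mu'}=-P_{12}/\overline{P_{21}}$. *)

theory Defs
  imports "HOL-Analysis.Analysis"
begin

definition mat2 :: "complex \<Rightarrow> complex \<Rightarrow> complex \<Rightarrow> complex \<Rightarrow> complex^2^2" where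
  "mat2 p11 p12 p21 p22 =
     (\<chi> i j. if i = 1 then (if j = 1 then p11 else p12) else (if j = 1 then p21 else p22))"

text \<open>Holonomy of the external defect A_1 (deficit angle psiA, z = eta + i phi).\<close>
definition QA1 :: "real \<Rightarrow> complex \<Rightarrow> complex^2^2" where
  "QA1 psiA z = mat2
     (of_real (cos (psiA/2)) - \<i> * cosh z * of_real (sin (psiA/2)))
     (\<i> * sinh z * of_real (sin (psiA/2)))
     (- \<i> * sinh z * of_real (sin (psiA/2)))
     (of_real (cos (psiA/2)) + \<i> * cosh z * of_real (sin (psiA/2)))"

definition Mmat :: "real \<Rightarrow> real \<Rightarrow> real \<Rightarrow> real \<Rightarrow> real \<Rightarrow> complex^2^2" where
  "Mmat a b c \<mu> \<chi>' = mat2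
     (Complex a b)
     (of_real (exp (-\<mu>) * c) * cis \<chi>')
     (- of_real (exp \<mu> * c) * cis (-\<chi>'))
     (Complex a (-b))"

end

theory Submission imports Defs begin

(*
  The holonomy Q = QA1 psiA z has the shape [[s, r], [-r, p]] and
  determinant 1, so its inverse is [[p, -r], [r, s]].  Writing
  M = [[w, K e^-mu], [-cnj K e^mu, cnj w]] with K = c e^(i chi), the
  subluminality condition cnj P11 = P22 for P = Q^-1 M is LINEAR in cnj w and
  determines it as cnj w = K W for an explicit W depending only on Q and mu.
  Substituting, both -P12 and cnj P21 become K times a REAL number; in the
  coordinates z = eta + i phi these numbers are proportional, with the same
  factor, to N = (A+h)m + h(hA-1) and D = (A-h)m - h(hA+1).  Hence the ratio
  is N/D, independent of a, b, c, chi.  Finally, exp(2 mu') = N/D gives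
  tanh mu' = (N-D)/(N+D) = h(m+hA)/(Am-h), which rearranges to the relation
  m m' - (h/A)(m+m') - h^2 = 0.
*)

section \<open>Calculus of 2x2 matrices given by their entries\<close>

lemma mat2_nth [simp]:
  "mat2 a b c d $ 1 $ 1 = a" "mat2 a b c d $ 1 $ 2 = b"
  "mat2 a b c d $ 2 $ 1 = c" "mat2 a b c d $ 2 $ 2 = d"
  by (simp_all add: mat2_def)

lemma mat2_mult:
  "mat2 a b c d ** mat2 e f g h = mat2 (a*e + b*g) (a*f + b*h) (c*e + d*g) (c*f + d*h)"
  by (simp add: matrix_matrix_mult_def mat2_def vec_eq_iff forall_2 sum_2)

lemma mat2_one: "mat2 1 0 0 1 = mat 1"
  by (simp add: mat2_def mat_def vec_eq_iff forall_2)

lemma mat2_inv_unimodular: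
  assumes "a*d - b*c = 1"
  shows "matrix_inv (mat2 a b c d) = mat2 d (-b) (-c) a"
proof -
  let ?A = "mat2 a b c d" and ?B = "mat2 d (-b) (-c) a"
  have right: "?A ** ?B = mat 1" and left: "?B ** ?A = mat 1"
    using assms by (simp_all add: mat2_mult algebra_simps flip: mat2_one)
  then have "\<exists>X. ?A ** X = mat 1 \<and> X ** ?A = mat 1" by blast
  then have inv_left: "matrix_inv ?A ** ?A = mat 1"
    unfolding matrix_inv_def by (rule someI2_ex) blast
  have "matrix_inv ?A = matrix_inv ?A ** (?A ** ?B)" by (simp add: right matrix_mul_rid)
  also have "\<dots> = ?B" by (simp add: matrix_mul_assoc inv_left matrix_mul_lid)
  finally show ?thesis .
qed

section \<open>A linear-algebra step: matrices of the shape [[s, r], [-r, p]]\<close>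

lemma offdiag_under_subluminal_condition:
  fixes p r s w K W :: complex and e1 e2 :: real
  assumes det: "s * p + r * r = 1"
    and W: "(cnj p - s) * W = r * of_real e1 - cnj r * of_real e2"
    and nondeg: "cnj p - s \<noteq> 0"
    and P: "P = matrix_inv (mat2 s r (-r) p) ** mat2 w (K * of_real e1) (- (cnj K * of_real e2)) (cnj w)"
    and cond: "cnj (P $ 1 $ 1) = P $ 2 $ 2"
  shows "- (P $ 1 $ 2) = K * (r * W - p * of_real e1)"
    and "cnj (P $ 2 $ 1) = K * (cnj r * W - cnj s * of_real e2)"
proof -
  have P_eq: "P = mat2 (p * w + r * (cnj K * of_real e2)) (p * (K * of_real e1) - r * cnj w)
                       (r * w - s * (cnj K * of_real e2)) (r * (K * of_real e1) + s * cnj w)"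
    using det unfolding P by (simp add: mat2_inv_unimodular mat2_mult algebra_simps)
  have "(cnj p - s) * cnj w = K * (r * of_real e1 - cnj r * of_real e2)"
    using cond unfolding P_eq by (simp add: algebra_simps)
  also have "\<dots> = (cnj p - s) * (K * W)" by (simp add: W)
  finally have w: "cnj w = K * W" using nondeg by simp
  show "- (P $ 1 $ 2) = K * (r * W - p * of_real e1)"
    unfolding P_eq by (simp add: w algebra_simps)
  show "cnj (P $ 2 $ 1) = K * (cnj r * W - cnj s * of_real e2)"
    unfolding P_eq by (simp add: w algebra_simps)
qed

section \<open>Real coordinates of the holonomies\<close>

lemma cosh_Complex: "cosh (Complex x y) = Complex (cosh x * cos y) (sinh x * sin y)"
  by (simp add: cosh_def sinh_def complex_eq_iff exp_eq_polar exp_minus field_simps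
      Re_divide Im_divide power2_eq_square)

lemma sinh_Complex: "sinh (Complex x y) = Complex (sinh x * cos y) (cosh x * sin y)"
  by (simp add: cosh_def sinh_def complex_eq_iff exp_eq_polar exp_minus field_simps
      Re_divide Im_divide power2_eq_square)

lemma QA1_det:
  "QA1 psiA z $1$1 * QA1 psiA z $2$2 - QA1 psiA z $1$2 * QA1 psiA z $2$1 = 1"
proof -
  have hyp: "(cosh z)\<^sup>2 = (sinh z)\<^sup>2 + 1" by (rule cosh_square_eq)
  have trig: "(complex_of_real (cos (psiA/2)))\<^sup>2 + (complex_of_real (sin (psiA/2)))\<^sup>2 = 1"
    by (metis of_real_add of_real_power of_real_1 sin_cos_squared_add2)
  have "\<i> * \<i> = (-1::complex)" by simp
  with hyp trig show ?thesis unfolding QA1_def mat2_nth by algebra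
qed

lemma QA1_Complex:
  fixes psiA \<eta> \<phi> :: real
  defines "al \<equiv> cos (psiA/2)" and "be \<equiv> sin (psiA/2)"
  shows "QA1 psiA (Complex \<eta> \<phi>) = mat2
     (Complex (al + be * sinh \<eta> * sin \<phi>) (- be * cosh \<eta> * cos \<phi>))
     (Complex (- be * cosh \<eta> * sin \<phi>) (be * sinh \<eta> * cos \<phi>))
     (- Complex (- be * cosh \<eta> * sin \<phi>) (be * sinh \<eta> * cos \<phi>))
     (Complex (al - be * sinh \<eta> * sin \<phi>) (be * cosh \<eta> * cos \<phi>))"
  unfolding QA1_def cosh_Complex sinh_Complex al_def be_def
  by (simp add: mat2_def vec_eq_iff forall_2 complex_eq_iff algebra_simps)

lemma Mmat_eq:
  "Mmat a b c \<mu> \<chi>' = mat2 (Complex a b) (c * cis \<chi>' * of_real (exp (-\<mu>)))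
     (- (cnj (c * cis \<chi>') * of_real (exp \<mu>))) (cnj (Complex a b))"
  unfolding Mmat_def by (simp add: mat2_def vec_eq_iff forall_2 complex_eq_iff cis.sel)

section \<open>The off-diagonal entries of P\<close>

lemma coordinate_identities:
  fixes al be ch sh co si cm sm :: real
  assumes "sh \<noteq> 0" "si \<noteq> 0" and hyp: "ch\<^sup>2 = sh\<^sup>2 + 1" and trig: "co\<^sup>2 + si\<^sup>2 = 1"
  defines "p \<equiv> Complex (al - be * sh * si) (be * ch * co)"
    and "r \<equiv> Complex (- be * ch * si) (be * sh * co)"
    and "s \<equiv> Complex (al + be * sh * si) (- be * ch * co)"
    and "W \<equiv> Complex (- ch * sm / sh) (- co * cm / si)"
  shows "cnj p - s = of_real (-2 * be * sh * si)"
    and "(cnj p - s) * W = r * of_real (cm - sm) - cnj r * of_real (cm + sm)"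
    and "r * W - p * of_real (cm - sm)
           = of_real (be * si * sm / sh + be * sh * cm / si - al * cm + al * sm)"
    and "cnj r * W - cnj s * of_real (cm + sm)
           = of_real (be * si * sm / sh - be * sh * cm / si - al * cm - al * sm)"
proof -
  show diag: "cnj p - s = of_real (-2 * be * sh * si)"
    unfolding p_def s_def by (simp add: complex_eq_iff)
  show "(cnj p - s) * W = r * of_real (cm - sm) - cnj r * of_real (cm + sm)"
    unfolding diag W_def r_def using assms(1,2) by (simp add: complex_eq_iff field_simps)
  show "r * W - p * of_real (cm - sm)
          = of_real (be * si * sm / sh + be * sh * cm / si - al * cm + al * sm)"
    unfolding p_def r_def W_def using assms(1,2)
    by (simp add: complex_eq_iff field_simps) (use hyp trig in algebra)
  show "cnj r * W - cnj s * of_real (cm + sm)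
          = of_real (be * si * sm / sh - be * sh * cm / si - al * cm - al * sm)"
    unfolding s_def r_def W_def using assms(1,2)
    by (simp add: complex_eq_iff field_simps) (use hyp trig in algebra)
qed

lemma offdiag_entries:
  fixes psiA \<eta> \<phi> a b c \<mu> \<chi>' :: real
  assumes "sin (psiA/2) \<noteq> 0" "sinh \<eta> \<noteq> 0" "sin \<phi> \<noteq> 0"
  defines "P \<equiv> matrix_inv (QA1 psiA (Complex \<eta> \<phi>)) ** Mmat a b c \<mu> \<chi>'"
    and "al \<equiv> cos (psiA/2)" and "be \<equiv> sin (psiA/2)"
    and "sh \<equiv> sinh \<eta>" and "si \<equiv> sin \<phi>" and "cm \<equiv> cosh \<mu>" and "sm \<equiv> sinh \<mu>"
  assumes cond: "cnj (P $ 1 $ 1) = P $ 2 $ 2"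
  shows "- (P $ 1 $ 2) = c * cis \<chi>' * of_real (be * si * sm / sh + be * sh * cm / si - al * cm + al * sm)"
    and "cnj (P $ 2 $ 1) = c * cis \<chi>' * of_real (be * si * sm / sh - be * sh * cm / si - al * cm - al * sm)"
proof -
  have sh0: "sh \<noteq> 0" and si0: "si \<noteq> 0" using assms(2,3) by (simp_all add: sh_def si_def)
  have hyp: "(cosh \<eta>)\<^sup>2 = sh\<^sup>2 + 1" by (simp add: sh_def cosh_square_eq)
  have trig: "(cos \<phi>)\<^sup>2 + si\<^sup>2 = 1" by (simp add: si_def)
  note ids = coordinate_identities[OF sh0 si0 hyp trig, where al = al and be = be]
  have exps: "exp (-\<mu>) = cm - sm" "exp \<mu> = cm + sm"
    by (simp_all add: cm_def sm_def cosh_minus_sinh cosh_plus_sinh)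
  have Q: "QA1 psiA (Complex \<eta> \<phi>) = mat2
      (Complex (al + be * sh * si) (- be * cosh \<eta> * cos \<phi>))
      (Complex (- be * cosh \<eta> * si) (be * sh * cos \<phi>))
      (- Complex (- be * cosh \<eta> * si) (be * sh * cos \<phi>))
      (Complex (al - be * sh * si) (be * cosh \<eta> * cos \<phi>))"
    unfolding QA1_Complex al_def be_def sh_def si_def ..
  have det: "Complex (al + be * sh * si) (- be * cosh \<eta> * cos \<phi>) * Complex (al - be * sh * si) (be * cosh \<eta> * cos \<phi>)
      + Complex (- be * cosh \<eta> * si) (be * sh * cos \<phi>) * Complex (- be * cosh \<eta> * si) (be * sh * cos \<phi>) = 1"
    using QA1_det[of psiA "Complex \<eta> \<phi>"] unfolding Q by simp
  have diag0: "of_real (-2 * be * sh * si) \<noteq> (0::complex)"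
    using assms(1) sh0 si0 by (simp add: be_def)
  have P_eq: "P = matrix_inv (QA1 psiA (Complex \<eta> \<phi>)) ** mat2 (Complex a b)
      (c * cis \<chi>' * of_real (cm - sm)) (- (cnj (c * cis \<chi>') * of_real (cm + sm))) (cnj (Complex a b))"
    unfolding P_def Mmat_eq exps ..
  note offdiag = offdiag_under_subluminal_condition[OF det ids(2) _ P_eq[unfolded Q] cond,
      unfolded ids(1), OF diag0]
  show "- (P $ 1 $ 2) = c * cis \<chi>' * of_real (be * si * sm / sh + be * sh * cm / si - al * cm + al * sm)"
    using offdiag(1) ids(3)[where cm = cm and sm = sm] by simp
  show "cnj (P $ 2 $ 1) = c * cis \<chi>' * of_real (be * si * sm / sh - be * sh * cm / si - al * cm - al * sm)"
    using offdiag(2) ids(4)[where cm = cm and sm = sm] by simp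
qed

lemma coordinate_factors:
  fixes al be sh si cm sm :: real
  assumes "al \<noteq> 0" "cm \<noteq> 0" "sh \<noteq> 0" "si \<noteq> 0"
  defines "A \<equiv> be / al" and "h \<equiv> sh / si" and "m \<equiv> sm / cm"
  shows "be * si * sm / sh + be * sh * cm / si - al * cm + al * sm
           = al * cm / h * ((A + h) * m + h * (h * A - 1))"
    and "be * si * sm / sh - be * sh * cm / si - al * cm - al * sm
           = al * cm / h * ((A - h) * m - h * (h * A + 1))"
  using assms by (simp_all add: field_simps power2_eq_square)

section \<open>The rapidity of the next junction\<close>

lemma tanh_eq_exp2: "tanh (x::real) = (exp (2*x) - 1) / (exp (2*x) + 1)"
proof -
  have pos: "exp (2 * x) > 0" by simp
  have inv: "exp (- 2 * x) = 1 / exp (2 * x)" by (simp add: exp_minus divide_inverse)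
  have "1 - 1 / exp (2 * x) = (exp (2 * x) - 1) / exp (2 * x)"
    and "1 + 1 / exp (2 * x) = (exp (2 * x) + 1) / exp (2 * x)"
    using pos by (simp_all add: field_simps)
  then show ?thesis unfolding tanh_real_altdef inv using pos by simp
qed

text \<open>
  If e^(2 mu') = N/D then m' = tanh mu' = (N-D)/(N+D) = h(m+hA)/(Am-h), which is the
  quadratic relation between the rapidities m and m'.
\<close>
lemma rapidity_relation:
  fixes A h m \<mu>' :: real
  defines "N \<equiv> (A + h) * m + h * (h * A - 1)" and "D \<equiv> (A - h) * m - h * (h * A + 1)"
  assumes "A \<noteq> 0" "D \<noteq> 0" and ratio: "exp (2 * \<mu>') = N / D"
  shows "m * tanh \<mu>' - h / A * (m + tanh \<mu>') - h\<^sup>2 = 0"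
proof -
  have "N / D \<noteq> -1" using ratio exp_gt_zero[of "2 * \<mu>'"] by linarith
  then have sum0: "N + D \<noteq> 0" using \<open>D \<noteq> 0\<close> by (auto simp: field_simps)
  have "tanh \<mu>' = (N / D - 1) / (N / D + 1)" unfolding ratio [symmetric] by (rule tanh_eq_exp2)
  also have "\<dots> = ((N - D) / D) / ((N + D) / D)" using \<open>D \<noteq> 0\<close> by (simp add: diff_divide_distrib add_divide_distrib)
  also have "\<dots> = (N - D) / (N + D)" using \<open>D \<noteq> 0\<close> by simp
  finally have cross: "tanh \<mu>' * (N + D) = N - D" using sum0 by simp
  have sumND: "N + D = 2 * (A * m - h)" and diffND: "N - D = 2 * (h * (m + h * A))"
    unfolding N_def D_def by (simp_all add: algebra_simps)
  have "2 * (tanh \<mu>' * (A * m - h)) = 2 * (h * (m + h * A))"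
    using cross unfolding sumND diffND by (simp only: mult.left_commute)
  then have key: "tanh \<mu>' * (A * m - h) = h * (m + h * A)" by simp
  have "A * (m * tanh \<mu>' - h / A * (m + tanh \<mu>') - h\<^sup>2) = tanh \<mu>' * (A * m - h) - h * (m + h * A)"
    using \<open>A \<noteq> 0\<close> by (simp add: field_simps power2_eq_square)
  with key \<open>A \<noteq> 0\<close> show ?thesis by simp
qed

lemma half_angle_nonzero:
  fixes psiA :: real
  assumes "0 < psiA" "psiA < 2 * pi" "psiA \<noteq> pi"
  shows "sin (psiA/2) \<noteq> 0" and "cos (psiA/2) \<noteq> 0"
proof -
  show "sin (psiA/2) \<noteq> 0" using assms(1,2) sin_gt_zero[of "psiA/2"] by auto
  show "cos (psiA/2) \<noteq> 0"
  proof
    assume "cos (psiA/2) = 0"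
    then have "cos (psiA/2) = cos (pi/2)" by simp
    moreover have "0 \<le> psiA/2" "psiA/2 \<le> pi" using assms(1,2) by auto
    ultimately have "psiA/2 = pi/2" using cos_inj_pi[of "psiA/2" "pi/2"] by simp
    with assms(3) show False by simp
  qed
qed

text \<open>
  The ratio of the off-diagonal entries: -P12 and cnj P21 are the same nonzero
  complex number K F times N and D respectively, so their quotient is N/D.
\<close>
lemma subluminal_offdiag_ratio:
  fixes psiA \<eta> \<phi> a b c \<mu> \<chi>' :: real
  assumes "0 < psiA" "psiA < 2*pi" "psiA \<noteq> pi"
    and "\<eta> \<noteq> 0" and "0 < \<phi>" "\<phi> < pi"
    and "c \<noteq> 0"
  defines "A \<equiv> tan (psiA/2)"
    and "h \<equiv> sinh \<eta> / sin \<phi>"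
    and "m \<equiv> tanh \<mu>"
    and "P \<equiv> matrix_inv (QA1 psiA (Complex \<eta> \<phi>)) ** Mmat a b c \<mu> \<chi>'"
  assumes cond: "cnj (P $ 1 $ 1) = P $ 2 $ 2"
  shows "- (P $ 1 $ 2) / cnj (P $ 2 $ 1)
           = of_real (((A + h) * m + h * (h * A - 1)) / ((A - h) * m - h * (h * A + 1)))"
proof -
  note half = half_angle_nonzero[OF assms(1-3)]
  have sh0: "sinh \<eta> \<noteq> 0" using \<open>\<eta> \<noteq> 0\<close> by simp
  have si0: "sin \<phi> \<noteq> 0" using sin_gt_zero[OF \<open>0 < \<phi>\<close> \<open>\<phi> < pi\<close>] by simp
  have cm0: "cosh \<mu> \<noteq> 0" by simp
  define F where "F = cos (psiA/2) * cosh \<mu> / h"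
  define K where "K = c * cis \<chi>'"
  have Ahm: "A = sin (psiA/2) / cos (psiA/2)" "h = sinh \<eta> / sin \<phi>" "m = sinh \<mu> / cosh \<mu>"
    unfolding A_def h_def m_def by (simp_all add: tan_def tanh_def)
  note entries = offdiag_entries[OF half(1) sh0 si0 cond[unfolded P_def], folded P_def K_def]
  have "- (P $ 1 $ 2) = K * of_real (F * ((A + h) * m + h * (h * A - 1)))"
    and "cnj (P $ 2 $ 1) = K * of_real (F * ((A - h) * m - h * (h * A + 1)))"
    using entries unfolding F_def Ahm coordinate_factors[OF half(2) cm0 sh0 si0] .
  moreover have "K \<noteq> 0" "F \<noteq> 0"
    using \<open>c \<noteq> 0\<close> half(2) sh0 si0 by (simp_all add: K_def F_def Ahm)
  ultimately show ?thesis by simp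
qed

text \<open>
  The main theorem.
\<close>
theorem mainTheorem8:
  fixes psiA \<eta> \<phi> a b c \<mu> \<chi>' :: real
  assumes "0 < psiA" "psiA < 2*pi" "psiA \<noteq> pi"
    and "\<eta> \<noteq> 0" and "0 < \<phi>" "\<phi> < pi"
    and "c \<noteq> 0"
  defines "A \<equiv> tan (psiA/2)"
    and "h \<equiv> sinh \<eta> / sin \<phi>"
    and "m \<equiv> tanh \<mu>"
    and "P \<equiv> matrix_inv (QA1 psiA (Complex \<eta> \<phi>)) ** Mmat a b c \<mu> \<chi>'"
  assumes "cnj (P $ 1 $ 1) = P $ 2 $ 2"
    and "cnj (P $ 2 $ 1) \<noteq> 0"
    and "(A - h) * m - h * (h * A + 1) \<noteq> 0"
  shows "- (P $ 1 $ 2) / cnj (P $ 2 $ 1)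
           = of_real (((A + h) * m + h * (h * A - 1)) / ((A - h) * m - h * (h * A + 1)))
       \<and> (\<forall>\<mu>'::real. - (P $ 1 $ 2) / cnj (P $ 2 $ 1) = of_real (exp (2 * \<mu>'))
             \<longrightarrow> m * tanh \<mu>' - h / A * (m + tanh \<mu>') - h^2 = 0)"
proof -
  have "A \<noteq> 0" using half_angle_nonzero[OF assms(1-3)] by (simp add: A_def tan_def)
  have ratio: "- (P $ 1 $ 2) / cnj (P $ 2 $ 1)
      = of_real (((A + h) * m + h * (h * A - 1)) / ((A - h) * m - h * (h * A + 1)))"
    using subluminal_offdiag_ratio[OF assms(1-7) \<open>cnj (P $ 1 $ 1) = P $ 2 $ 2\<close>[unfolded P_def]]
    unfolding A_def h_def m_def P_def .
  show ?thesis
  proof (intro conjI allI impI)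
    show "- (P $ 1 $ 2) / cnj (P $ 2 $ 1)
        = of_real (((A + h) * m + h * (h * A - 1)) / ((A - h) * m - h * (h * A + 1)))"
      by (fact ratio)
  next
    fix \<mu>' :: real
    assume "- (P $ 1 $ 2) / cnj (P $ 2 $ 1) = of_real (exp (2 * \<mu>'))"
    then have "exp (2 * \<mu>') = ((A + h) * m + h * (h * A - 1)) / ((A - h) * m - h * (h * A + 1))"
      unfolding ratio by (simp only: of_real_eq_iff)
    with \<open>A \<noteq> 0\<close> \<open>(A - h) * m - h * (h * A + 1) \<noteq> 0\<close>
    show "m * tanh \<mu>' - h / A * (m + tanh \<mu>') - h^2 = 0"
      by (rule rapidity_relation)
  qed
qed

end
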